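(* Let $\nu>0$, $v_0>0$ and $w_0\in\mathbb{R}\setminus\{0\}$, and define for $t\ge0$ $$\omega_{-1}(t)=\frac{w_0e^{\nu t}}{\left(1-\frac{w_0}{1+v_0}t+\frac{e^{\nu t}-1}{2}(1+v_0)\right)^2},\qquad v_c(t)=\frac{-1+\frac{w_0}{1+v_0}t+\frac{e^{\nu t}+1}{2}(1+v_0)}{1-\frac{w_0}{1+v_0}t+\frac{e^{\nu t}-1}{2}(1+v_0)},$$ which solves $\frac{d\omega_{-1}}{dt}=-\nu v_c\omega_{-1}+\frac{2\omega_{-1}^2}{1+v_c}$, $\frac{dv_c}{dt}=\omega_{-1}+\frac{\nu}{2}(1-v_c^2)$ with $v_c(0)=v_0$, $\omega_{-1}(0)=w_0$. Let $\omega(x,0)=\omega_-(x,0)+\overline{\omega_-(\bar x,0)}$ with $\omega_-(x,0)=w_0\left[\frac{1}{\tan(x/2)-\mathrm{i}v_0}-\frac{1}{-\mathrm{i}-\mathrm{i}v_0}\right]$. Suppose collapse occurs, i.e. there is a finite $t_c>0$ such that $v_c(t)\in(0,\infty)$ for $t\in[0,t_c)$ and either $v_c(t)\to0$ or $v_c(t)\to+\infty$ as $t\to t_c^-$. Then $$\|\omega(\cdot,0)\|_{B_0}\ge2e\nu\quad\text{and}\quad \|\omega(\cdot,0)\|_{L^2}\ge\frac{2\sqrt{\pi}\,\nu}{\sqrt{M}},\qquad M=\max_{s\ge0}\left(e^{-2s}-(1-s)^2\right)$$ (so $\|\omega(\cdot,0)\|_{L^2}\gtrsim 8.81\,\nu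$).
   Context: This is the single complex-conjugate pole-pair solution of the generalized Constantin–Lax–Majda equation with $a=0$, $\sigma=1$, zero mean ($\omega_{av}=0$) and real data, on the circle. Norms: $\|f\|_{L^2}^2=\int_{-\pi}^{\pi}|f|^2dx$ and $\|f\|_{B_0}=\sum_{k\in\mathbb{Z}}|\hat f_k|$ with $\hat f_k=\frac{1}{2\pi}\int_{-\pi}^{\pi}f(x)e^{-\mathrm{i}kx}dx$; explicitly $\|\omega(\cdot,0)\|_{L^2}^2=\frac{4\pi w_0^2}{v_0(1+v_0)^2}$ and $\|\omega(\cdot,0)\|_{B_0}=\frac{|w_0|}{v_0}\left(\left|\frac{1-v_0}{1+v_0}\right|+1\right)$. *)

theory Defs
  imports "HOL-Analysis.Analysis"
begin

text \<open>Pole-pair solution of the generalized CLM equation (a = 0, sigma = 1).\<close>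

definition clm_den :: "real \<Rightarrow> real \<Rightarrow> real \<Rightarrow> real \<Rightarrow> real" where
  "clm_den \<nu> v0 w0 t = 1 - w0 / (1 + v0) * t + (exp (\<nu> * t) - 1) / 2 * (1 + v0)"

definition omega_m1 :: "real \<Rightarrow> real \<Rightarrow> real \<Rightarrow> real \<Rightarrow> real" where
  "omega_m1 \<nu> v0 w0 t = w0 * exp (\<nu> * t) / (clm_den \<nu> v0 w0 t)^2"

definition v_c :: "real \<Rightarrow> real \<Rightarrow> real \<Rightarrow> real \<Rightarrow> real" where
  "v_c \<nu> v0 w0 t =
     (-1 + w0 / (1 + v0) * t + (exp (\<nu> * t) + 1) / 2 * (1 + v0)) / clm_den \<nu> v0 w0 t"

text \<open>Initial data on the circle, x in [-pi,pi] (real x, so conj x = x).\<close>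

definition omega_minus0 :: "real \<Rightarrow> real \<Rightarrow> real \<Rightarrow> complex" where
  "omega_minus0 v0 w0 x =
     complex_of_real w0 * (1 / (complex_of_real (tan (x / 2)) - \<i> * complex_of_real v0)
                           - 1 / (- \<i> - \<i> * complex_of_real v0))"

definition omega0 :: "real \<Rightarrow> real \<Rightarrow> real \<Rightarrow> complex" where
  "omega0 v0 w0 x = omega_minus0 v0 w0 x + cnj (omega_minus0 v0 w0 x)"

definition L2_norm :: "(real \<Rightarrow> complex) \<Rightarrow> real" where
  "L2_norm f = sqrt (integral {-pi..pi} (\<lambda>x. (cmod (f x))^2))"

definition fourier_coeff :: "(real \<Rightarrow> complex) \<Rightarrow> int \<Rightarrow> complex" where
  "fourier_coeff f k =
     integral {-pi..pi} (\<lambda>x. f x * exp (- \<i> * of_int k * complex_of_real x)) / (2 * complex_of_real pi)"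

definition B0_norm :: "(real \<Rightarrow> complex) \<Rightarrow> real" where
  "B0_norm f = infsum (\<lambda>k::int. cmod (fourier_coeff f k)) UNIV"

end

theory Submission
  imports Defs
begin

text \<open>
With a = (1 - v0) / (1 + v0), |a| < 1, and c = 2 i w0 / (1 + v0)^2, the initial vorticity is
g + cnj g for the simple pole g x = c / (e^(ix) - a). Its Fourier coefficients are therefore
c a^(|k| - 1) for k < 0 and their conjugates for k > 0, so that ||omega||_B0 = 2 |c| / (1 - |a|);
the partial fraction decomposition of |g|^2 gives ||omega||_L2^2 = 4 pi |c|^2 / (1 - a^2).

At a collapse time tc the numerator or the denominator of v_c vanishes, and either way
|w0| tc = (1 + v0) (p + q v0) with {p, q} = {(e^s + 1) / 2, (e^s - 1) / 2}, s = nu tc.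
The B0 bound follows from p + q v0 >= min v0 1 * e^s and e^s >= e s, the L2 bound from
(p + q v0)^2 >= 4 p q v0 = v0 (e^(2s) - 1) and s^2 <= M (e^(2s) - 1).
\<close>

section \<open>Fourier coefficients on the circle\<close>

lemma fourier_coeff_cis:
  "fourier_coeff f k = integral {-pi..pi} (\<lambda>x. f x * cis (- (of_int k * x))) / (2 * pi)"
  unfolding fourier_coeff_def by (simp add: cis_conv_exp mult.assoc)

lemma fourier_coeff_const_one: "fourier_coeff (\<lambda>_. 1) k = (if k = 0 then 1 else 0)"
proof (cases "k = 0")
  case True
  then show ?thesis
    using has_integral_const_real[of "1::complex" "-pi" pi]
    by (simp add: fourier_coeff_cis integral_unique scaleR_conv_of_real)
next
  case False
  let ?F = "\<lambda>x. cis (- (of_int k * x)) / (- \<i> * of_int k)"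
  have "((\<lambda>x. cis (- (of_int k * x))) has_integral ?F pi - ?F (-pi)) {-pi..pi}"
  proof (rule fundamental_theorem_of_calculus)
    fix x :: real
    have "((\<lambda>z. exp (- \<i> * of_int k * z) / (- \<i> * of_int k)) has_field_derivative
            exp (- \<i> * of_int k * of_real x)) (at (of_real x))"
      using False by (auto intro!: derivative_eq_intros)
    from has_vector_derivative_real_field[OF this]
    show "(?F has_vector_derivative cis (- (of_int k * x))) (at x within {-pi..pi})"
      by (simp add: cis_conv_exp mult.assoc)
  qed simp
  moreover have "cis (of_int k * pi) = cis (- (of_int k * pi))"
  proof -
    have "cis (of_int k * pi) = cis (- (of_int k * pi) + 2 * pi * of_int k)"
      by (simp add: algebra_simps)
    also have "\<dots> = cis (- (of_int k * pi))"
      by (simp only: cis_mult[symmetric]) simp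
    finally show ?thesis .
  qed
  ultimately show ?thesis
    using False by (simp add: fourier_coeff_cis integral_unique)
qed

lemma fourier_coeff_add:
  assumes "continuous_on {-pi..pi} f" and "continuous_on {-pi..pi} g"
  shows "fourier_coeff (\<lambda>x. f x + g x) k = fourier_coeff f k + fourier_coeff g k"
proof -
  have "(\<lambda>x. h x * cis (- (of_int k * x))) integrable_on {-pi..pi}"
    if "continuous_on {-pi..pi} h" for h :: "real \<Rightarrow> complex"
    by (intro integrable_continuous_interval continuous_intros that)
  from this[OF assms(1)] this[OF assms(2)] show ?thesis
    by (simp add: fourier_coeff_cis distrib_right integral_add add_divide_distrib)
qed

lemma fourier_coeff_mult_left: "fourier_coeff (\<lambda>x. c * f x) k = c * fourier_coeff f k"
  by (simp add: fourier_coeff_cis mult.assoc)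

lemma fourier_coeff_mult_cis: "fourier_coeff (\<lambda>x. cis x * f x) k = fourier_coeff f (k - 1)"
proof -
  have "cis x * f x * cis (- (of_int k * x)) = f x * cis (- (of_int (k - 1) * x))" for x
    by (simp add: cis_mult algebra_simps)
  then show ?thesis by (simp only: fourier_coeff_cis)
qed

lemma fourier_coeff_cnj: "fourier_coeff (\<lambda>x. cnj (f x)) k = cnj (fourier_coeff f (- k))"
  by (simp add: fourier_coeff_cis integral_cnj cis_cnj)

lemma norm_fourier_coeff_le:
  assumes "continuous_on {-pi..pi} f" and "\<And>x. norm (f x) \<le> B"
  shows "norm (fourier_coeff f k) \<le> B"
proof -
  have "norm (integral {-pi..pi} (\<lambda>x. f x * cis (- (of_int k * x)))) \<le> B * (pi - - pi)"
    by (rule integral_bound) (simp, intro continuous_intros assms(1), simp add: norm_mult assms(2))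
  then show ?thesis by (simp add: fourier_coeff_cis norm_divide divide_le_eq mult.commute)
qed

lemma integral_eq_fourier_coeff_0: "integral {-pi..pi} f = 2 * pi * fourier_coeff f 0"
  by (simp add: fourier_coeff_cis)

lemma bounded_geometric_recurrence_imp_zero:
  fixes X :: "nat \<Rightarrow> 'a::real_normed_field"
  assumes "\<And>n. X n = c * X (Suc n)" and "\<And>n. norm (X n) \<le> B" and "norm c < 1"
  shows "X 0 = 0"
proof -
  have power_form: "X 0 = c ^ n * X n" for n
  proof (induction n)
    case (Suc n)
    have "X n = c * X (Suc n)" by (rule assms(1))
    with Suc.IH show ?case by (simp add: mult_ac)
  qed simp
  have bound: "norm (X 0) \<le> norm c ^ n * B" for n
  proof -
    have "norm (X 0) = norm c ^ n * norm (X n)"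
      by (subst power_form[of n]) (simp add: norm_mult norm_power)
    also have "\<dots> \<le> norm c ^ n * B"
      by (simp add: assms(2) mult_left_mono)
    finally show ?thesis .
  qed
  have "(\<lambda>n. norm c ^ n * B) \<longlonglongrightarrow> 0"
    using assms(3) by (intro tendsto_mult_left_zero LIMSEQ_power_zero) simp
  then have "norm (X 0) \<le> 0"
    by (rule LIMSEQ_le_const) (use bound in blast)
  then show ?thesis by simp
qed

lemma has_sum_two_sided_geometric:
  fixes q r :: real
  assumes "0 \<le> q" and "q < 1" and "0 \<le> r"
  shows "((\<lambda>k::int. if k = 0 then 0 else r * q ^ (nat \<bar>k\<bar> - 1)) has_sum (2 * r / (1 - q))) UNIV"
proof -
  define F where "F k = (if k = 0 then 0 else r * q ^ (nat \<bar>k\<bar> - 1))" for k :: int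
  define pos neg where "pos n = int n + 1" and "neg n = - int n - 1" for n :: nat
  have "(\<lambda>n. r * q ^ n) sums (r * (1 / (1 - q)))"
    using assms by (intro sums_mult geometric_sums) auto
  then have geometric: "((\<lambda>n. r * q ^ n) has_sum (r / (1 - q))) UNIV"
    using assms by (intro sums_nonneg_imp_has_sum) auto
  have "F \<circ> pos = (\<lambda>n. r * q ^ n)" "F \<circ> neg = (\<lambda>n. r * q ^ n)"
    by (auto simp: fun_eq_iff F_def pos_def neg_def nat_add_distrib)
  moreover have "inj pos" "inj neg"
    by (auto intro: injI simp: pos_def neg_def)
  ultimately have "(F has_sum (r / (1 - q))) (range pos)" "(F has_sum (r / (1 - q))) (range neg)"
    using geometric by (simp_all add: has_sum_reindex)
  then have "(F has_sum (F 0 + (r / (1 - q) + r / (1 - q)))) (insert 0 (range pos \<union> range neg))"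
    by (intro has_sum_insert has_sum_Un_disjoint) (auto simp: pos_def neg_def)
  moreover have "insert 0 (range pos \<union> range neg) = UNIV"
  proof -
    have "k \<in> range pos \<union> range neg" if "k \<noteq> 0" for k
    proof (cases "k > 0")
      case True
      then have "k = pos (nat (k - 1))" by (simp add: pos_def)
      then show ?thesis by blast
    next
      case False
      then have "k = neg (nat (- k - 1))" using that by (simp add: neg_def)
      then show ?thesis by blast
    qed
    then show ?thesis by blast
  qed
  ultimately show ?thesis
    by (simp add: F_def[abs_def])
qed

section \<open>Fourier coefficients of powers of a simple pole\<close>

definition pole_power :: "nat \<Rightarrow> real \<Rightarrow> real \<Rightarrow> complex" where
  "pole_power m a x = inverse ((cis x - of_real a) ^ m)"

lemma pole_power_0 [simp]: "pole_power 0 a = (\<lambda>_. 1)"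
  by (simp add: pole_power_def fun_eq_iff)

lemma norm_cis_minus_of_real_ge: "1 - \<bar>a\<bar> \<le> norm (cis x - of_real a)"
  using norm_triangle_ineq2[of "cis x" "of_real a"] by simp

lemma cis_minus_of_real_nonzero: "\<bar>a\<bar> < 1 \<Longrightarrow> cis x - of_real a \<noteq> 0"
  using norm_cis_minus_of_real_ge[of a x] by auto

lemma continuous_on_pole_power:
  assumes "\<bar>a\<bar> < 1"
  shows "continuous_on S (pole_power m a)"
  unfolding pole_power_def
proof (intro continuous_on_inverse continuous_intros)
  show "\<forall>x\<in>S. (cis x - of_real a) ^ m \<noteq> 0"
    using cis_minus_of_real_nonzero[OF assms] by simp
qed

lemma norm_pole_power_le:
  assumes "\<bar>a\<bar> < 1"
  shows "norm (pole_power m a x) \<le> inverse ((1 - \<bar>a\<bar>) ^ m)"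
proof -
  have "(1 - \<bar>a\<bar>) ^ m \<le> norm (cis x - of_real a) ^ m"
    using assms by (intro power_mono norm_cis_minus_of_real_ge) simp
  then show ?thesis
    using assms by (simp add: pole_power_def norm_inverse norm_power le_imp_inverse_le)
qed

lemma fourier_coeff_pole_power_recurrence:
  assumes "\<bar>a\<bar> < 1"
  shows "fourier_coeff (pole_power m a) k
       = fourier_coeff (pole_power (Suc m) a) (k - 1) - of_real a * fourier_coeff (pole_power (Suc m) a) k"
proof -
  let ?P = "pole_power (Suc m) a"
  have "pole_power m a x = (cis x - of_real a) * ?P x" for x
    using cis_minus_of_real_nonzero[OF assms, of x] by (simp add: pole_power_def)
  then have "pole_power m a = (\<lambda>x. cis x * ?P x + (- of_real a) * ?P x)"
    by (simp add: fun_eq_iff algebra_simps)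
  then have "fourier_coeff (pole_power m a) k
      = fourier_coeff (\<lambda>x. cis x * ?P x) k + fourier_coeff (\<lambda>x. (- of_real a) * ?P x) k"
    by (simp only:) (intro fourier_coeff_add continuous_intros continuous_on_pole_power assms)
  then show ?thesis
    by (simp only: fourier_coeff_mult_left fourier_coeff_mult_cis) simp
qed

lemma fourier_coeff_pole_power_Suc_vanishes:
  assumes "\<bar>a\<bar> < 1" and "\<And>j. 0 < j \<Longrightarrow> fourier_coeff (pole_power m a) j = 0" and "0 \<le> k"
  shows "fourier_coeff (pole_power (Suc m) a) k = 0"
proof -
  let ?X = "\<lambda>n. fourier_coeff (pole_power (Suc m) a) (k + int n)"
  \<comment> \<open>read upwards in k, the recurrence scales the coefficients by a; being bounded, they vanish\<close>
  have "?X n = of_real a * ?X (Suc n)" for n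
    using fourier_coeff_pole_power_recurrence[OF assms(1), of m "k + int (Suc n)"] assms(2,3)
    by simp
  moreover have "norm (?X n) \<le> inverse ((1 - \<bar>a\<bar>) ^ Suc m)" for n
    by (intro norm_fourier_coeff_le continuous_on_pole_power norm_pole_power_le assms(1))
  ultimately have "?X 0 = 0"
    by (rule bounded_geometric_recurrence_imp_zero) (use assms(1) in simp)
  then show ?thesis by simp
qed

lemma fourier_coeff_pole_power_nonneg:
  assumes "\<bar>a\<bar> < 1" and "0 \<le> k"
  shows "fourier_coeff (pole_power (Suc m) a) k = 0"
  using assms(2)
proof (induction m arbitrary: k)
  case 0
  show ?case
    by (rule fourier_coeff_pole_power_Suc_vanishes[OF assms(1)])
       (use 0 in \<open>simp_all add: fourier_coeff_const_one\<close>)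
next
  case (Suc m)
  then show ?case
    by (rule fourier_coeff_pole_power_Suc_vanishes[OF assms(1)]) simp_all
qed

lemma fourier_coeff_pole_power_1_neg:
  assumes "\<bar>a\<bar> < 1"
  shows "fourier_coeff (pole_power 1 a) (- int n - 1) = of_real a ^ n"
proof (induction n)
  case 0
  show ?case
    using fourier_coeff_pole_power_recurrence[OF assms, of 0 0]
      fourier_coeff_pole_power_nonneg[OF assms, of 0 0]
    by (simp add: fourier_coeff_const_one)
next
  case (Suc n)
  then show ?case
    using fourier_coeff_pole_power_recurrence[OF assms, of 0 "- int n - 1"]
    by (simp add: fourier_coeff_const_one algebra_simps)
qed

lemma fourier_coeff_pole_power_1:
  assumes "\<bar>a\<bar> < 1"
  shows "fourier_coeff (pole_power 1 a) k = (if 0 \<le> k then 0 else of_real a ^ nat (- k - 1))"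
proof (cases "0 \<le> k")
  case False
  then have "k = - int (nat (- k - 1)) - 1" by simp
  then show ?thesis
    using False fourier_coeff_pole_power_1_neg[OF assms, of "nat (- k - 1)"] by simp
qed (use fourier_coeff_pole_power_nonneg[OF assms] in simp)

lemma norm_fourier_coeff_pole_sum:
  assumes "\<bar>a\<bar> < 1"
  shows "norm (fourier_coeff (\<lambda>x. c * pole_power 1 a x + cnj (c * pole_power 1 a x)) k)
       = (if k = 0 then 0 else norm c * \<bar>a\<bar> ^ (nat \<bar>k\<bar> - 1))"
proof -
  let ?p = "pole_power 1 a"
  have "continuous_on {-pi..pi} (\<lambda>x. c * ?p x)" "continuous_on {-pi..pi} (\<lambda>x. cnj (c * ?p x))"
    by (intro continuous_intros continuous_on_pole_power assms)+
  then have "fourier_coeff (\<lambda>x. c * ?p x + cnj (c * ?p x)) k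
      = c * fourier_coeff ?p k + cnj (c * fourier_coeff ?p (- k))"
    by (simp only: fourier_coeff_add fourier_coeff_cnj fourier_coeff_mult_left)
  also have "\<dots> = (if k = 0 then 0 else if 0 < k then cnj (c * of_real a ^ (nat \<bar>k\<bar> - 1))
                   else c * of_real a ^ (nat \<bar>k\<bar> - 1))"
    by (simp only: fourier_coeff_pole_power_1[OF assms]) (auto simp: nat_diff_distrib)
  finally show ?thesis
    by (simp add: norm_mult norm_power)
qed

lemma partial_fractions_reciprocal_pair:
  fixes z w a :: complex
  assumes "z * w = 1" and "z \<noteq> a" and "w \<noteq> a" and "a^2 \<noteq> 1"
  shows "1 / ((z - a) * (w - a)) = (1 + a / (z - a) + a / (w - a)) / (1 - a^2)"
proof -
  have "z - a \<noteq> 0" "w - a \<noteq> 0" "1 - a^2 \<noteq> 0"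
    using assms by auto
  then have "1 + a / (z - a) + a / (w - a) = ((z - a) * (w - a) + a * (w - a) + a * (z - a)) / ((z - a) * (w - a))"
    by (simp add: field_simps)
  also have "(z - a) * (w - a) + a * (w - a) + a * (z - a) = 1 - a^2"
    using assms(1) by (simp add: algebra_simps power2_eq_square)
  finally show ?thesis
    using \<open>1 - a^2 \<noteq> 0\<close> by simp
qed

lemma pole_abs_square_partial_fractions:
  assumes "\<bar>a\<bar> < 1"
  shows "pole_power 1 a x * cnj (pole_power 1 a x)
       = (1 + of_real a * pole_power 1 a x + of_real a * cnj (pole_power 1 a x)) / (1 - of_real a ^ 2)"
proof -
  have "a^2 \<noteq> 1"
    using assms by (simp add: abs_square_eq_1)
  then have "(complex_of_real a)^2 \<noteq> 1"
    by (metis of_real_eq_1_iff of_real_power)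
  moreover have "cis x - of_real a \<noteq> 0" "cnj (cis x) - of_real a \<noteq> 0"
    using cis_minus_of_real_nonzero[OF assms] by (simp_all add: cis_cnj)
  ultimately show ?thesis
    using partial_fractions_reciprocal_pair[of "cis x" "cnj (cis x)" "of_real a"]
    by (simp add: pole_power_def cis_cnj cis_mult divide_inverse)
qed

lemma has_integral_pole_power:
  assumes "\<bar>a\<bar> < 1"
  shows "(pole_power (Suc m) a has_integral 0) {-pi..pi}"
    and "((\<lambda>x. cnj (pole_power (Suc m) a x)) has_integral 0) {-pi..pi}"
proof -
  have "pole_power (Suc m) a integrable_on {-pi..pi}"
    by (intro integrable_continuous_interval continuous_on_pole_power assms)
  moreover have "integral {-pi..pi} (pole_power (Suc m) a) = 0"
    by (simp add: integral_eq_fourier_coeff_0 fourier_coeff_pole_power_nonneg[OF assms])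
  ultimately show "(pole_power (Suc m) a has_integral 0) {-pi..pi}"
    by (metis integrable_integral)
  then show "((\<lambda>x. cnj (pole_power (Suc m) a x)) has_integral 0) {-pi..pi}"
    using has_integral_cnj[of "pole_power (Suc m) a" 0] by (simp add: o_def)
qed

lemma has_integral_pole_abs_square:
  assumes "\<bar>a\<bar> < 1"
  shows "((\<lambda>x. pole_power 1 a x * cnj (pole_power 1 a x)) has_integral of_real (2 * pi / (1 - a^2))) {-pi..pi}"
proof -
  let ?p = "pole_power 1 a"
  have "((\<lambda>x. 1 + of_real a * ?p x + of_real a * cnj (?p x))
          has_integral (2 * of_real pi + of_real a * 0 + of_real a * 0 :: complex)) {-pi..pi}"
    using has_integral_pole_power[OF assms, of 0] has_integral_const_real[of "1::complex" "-pi" pi]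
    by (intro has_integral_add has_integral_mult_right) (simp_all add: scaleR_conv_of_real)
  from has_integral_divide[OF this, of "1 - of_real a ^ 2"] show ?thesis
    unfolding pole_abs_square_partial_fractions[OF assms] by simp
qed

lemma has_integral_square_pole_sum:
  assumes "\<bar>a\<bar> < 1"
  shows "((\<lambda>x. (c * pole_power 1 a x + cnj (c * pole_power 1 a x))^2)
           has_integral of_real (4 * pi * norm c ^ 2 / (1 - a^2))) {-pi..pi}"
proof -
  let ?p = "pole_power 1 a"
  have expand: "(c * ?p x + cnj (c * ?p x))^2
      = c^2 * pole_power 2 a x + cnj c ^ 2 * cnj (pole_power 2 a x) + 2 * (c * cnj c) * (?p x * cnj (?p x))" for x
  proof -
    have "pole_power 2 a x = ?p x ^ 2"
      by (simp add: pole_power_def power_inverse)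
    then show ?thesis
      by (simp add: power2_eq_square algebra_simps)
  qed
  have "((\<lambda>x. c^2 * pole_power 2 a x + cnj c ^ 2 * cnj (pole_power 2 a x) + 2 * (c * cnj c) * (?p x * cnj (?p x)))
          has_integral (c^2 * 0 + cnj c ^ 2 * 0 + 2 * (c * cnj c) * of_real (2 * pi / (1 - a^2)))) {-pi..pi}"
    using has_integral_pole_power[OF assms, of 1] has_integral_pole_abs_square[OF assms]
    by (intro has_integral_add has_integral_mult_right) (simp_all add: numeral_2_eq_2)
  moreover have "c * cnj c = of_real (norm c ^ 2)"
    by (simp add: complex_norm_square[symmetric])
  ultimately show ?thesis
    unfolding expand by (simp add: mult_ac)
qed

section \<open>The norms of the initial vorticity\<close>

lemma half_angle_pole_identity:
  fixes C S v0 w0 :: real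
  assumes "C \<noteq> 0" and "v0 > 0" and "C^2 + S^2 = 1"
  defines "h \<equiv> complex_of_real C + \<i> * S"
  shows "of_real w0 * (1 / (of_real (S / C) - \<i> * of_real v0) - 1 / (- \<i> - \<i> * of_real v0))
       = \<i> * of_real (2*w0/(1+v0)^2) / (h^2 - of_real ((1-v0)/(1+v0)))"
proof -
  define F where "F = complex_of_real S - \<i> * v0 * C"
  define p where "p = complex_of_real (1 + v0)"
  have "F \<noteq> 0" "p \<noteq> 0"
    using assms(1,2) by (auto simp: F_def p_def complex_eq_iff)
  have "h * cnj h = 1"
    using arg_cong[OF assms(3), of complex_of_real]
    by (simp add: h_def algebra_simps power2_eq_square)
  then have "h \<noteq> 0" by auto
  \<comment> \<open>the factorisation behind the identity: both sides equal w0 / ((1 + v0) h F)\<close>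
  have "p * h^2 - (1 - v0) * (C^2 + S^2) = 2 * \<i> * h * F"
    by (simp add: p_def h_def F_def algebra_simps power2_eq_square)
  then have denom: "h^2 - of_real ((1-v0)/(1+v0)) = 2 * \<i> * h * F / p"
    using assms(3) \<open>p \<noteq> 0\<close> by (simp add: p_def field_simps)
  have tan_part: "1 / (of_real (S / C) - \<i> * of_real v0) = of_real C / F"
    using assms(1) \<open>F \<noteq> 0\<close> by (simp add: F_def field_simps)
  have const_part: "1 / (- \<i> - \<i> * of_real v0) = \<i> / p"
  proof -
    have "- \<i> - \<i> * of_real v0 = - \<i> * p"
      by (simp add: p_def algebra_simps)
    show ?thesis
      unfolding \<open>- \<i> - \<i> * of_real v0 = - \<i> * p\<close> using \<open>p \<noteq> 0\<close> by (simp add: field_simps)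
  qed
  have "of_real w0 * (1 / (of_real (S / C) - \<i> * of_real v0) - 1 / (- \<i> - \<i> * of_real v0))
      = of_real w0 * (p * C - \<i> * F) / (p * F)"
    unfolding tan_part const_part using \<open>F \<noteq> 0\<close> \<open>p \<noteq> 0\<close> by (simp add: field_simps)
  also have "p * C - \<i> * F = cnj h"
    by (simp add: p_def h_def F_def algebra_simps)
  also have "cnj h = 1 / h"
    using \<open>h * cnj h = 1\<close> by (metis eq_divide_eq mult.commute mult_zero_left zero_neq_one)
  also have "of_real w0 * (1 / h) / (p * F) = \<i> * (2 * of_real w0 / p^2) / (2 * \<i> * h * F / p)"
    using \<open>F \<noteq> 0\<close> \<open>p \<noteq> 0\<close> \<open>h \<noteq> 0\<close> by (simp add: field_simps power2_eq_square)
  finally show ?thesis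
    unfolding denom by (simp add: p_def)
qed

definition pole_location :: "real \<Rightarrow> real" where
  "pole_location v0 = (1 - v0) / (1 + v0)"

definition pole_coefficient :: "real \<Rightarrow> real \<Rightarrow> complex" where
  "pole_coefficient v0 w0 = \<i> * of_real (2 * w0 / (1 + v0)^2)"

lemma omega0_eq_pole_sum:
  fixes v0 w0 :: real
  assumes "v0 > 0"
  defines "c \<equiv> pole_coefficient v0 w0" and "a \<equiv> pole_location v0"
  shows "omega0 v0 w0 x = c * pole_power 1 a x + cnj (c * pole_power 1 a x)"
proof (cases "cos (x/2) = 0")
  case False
  have "cis x = cis (x/2) ^ 2"
    by (simp add: power2_eq_square cis_mult)
  also have "cis (x/2) = complex_of_real (cos (x/2)) + \<i> * sin (x/2)"
    by (simp add: complex_eq_iff)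
  finally have cis_half: "cis x = (complex_of_real (cos (x/2)) + \<i> * sin (x/2))^2" .
  have "omega_minus0 v0 w0 x
      = of_real w0 * (1 / (of_real (sin (x/2) / cos (x/2)) - \<i> * of_real v0) - 1 / (- \<i> - \<i> * of_real v0))"
    by (simp only: omega_minus0_def tan_def)
  also have "\<dots> = c / (cis x - of_real a)"
    unfolding cis_half c_def a_def pole_coefficient_def pole_location_def
    by (rule half_angle_pole_identity[OF False assms(1)]) simp
  finally have "omega_minus0 v0 w0 x = c * pole_power 1 a x"
    by (simp add: pole_power_def divide_inverse)
  then show ?thesis by (simp add: omega0_def)
next
  case True
  \<comment> \<open>here tan (x/2) = 0 by the convention x / 0 = 0; the two sides of the half-angle
    identity then differ, but both have real part 0\<close>
  then have "cis x = - 1"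
    using cos_double[of "x/2"] sin_double[of "x/2"] sin_cos_squared_add[of "x/2"]
    by (simp add: complex_eq_iff)
  then have "Re (omega_minus0 v0 w0 x) = 0" "Re (c * pole_power 1 a x) = 0"
    using True by (simp_all add: omega_minus0_def tan_def c_def pole_coefficient_def pole_power_def Re_divide)
  then show ?thesis
    by (simp only: omega0_def complex_add_cnj)
qed

lemma one_minus_abs_pole_location:
  assumes "v0 > 0"
  shows "1 - \<bar>pole_location v0\<bar> = 2 * min v0 1 / (1 + v0)"
  using assms by (cases "v0 \<le> 1") (simp_all add: pole_location_def abs_if field_simps)

lemma abs_pole_location_less_1:
  assumes "v0 > 0"
  shows "\<bar>pole_location v0\<bar> < 1"
proof -
  have "2 * min v0 1 / (1 + v0) > 0"
    using assms by simp
  then show ?thesis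
    using one_minus_abs_pole_location[OF assms] by linarith
qed

lemma one_minus_pole_location_square:
  assumes "v0 > 0"
  shows "1 - pole_location v0 ^ 2 = 4 * v0 / (1 + v0)^2"
proof -
  have "(1 + v0)^2 \<noteq> 0"
    using assms by simp
  then have "1 - pole_location v0 ^ 2 = ((1 + v0)^2 - (1 - v0)^2) / (1 + v0)^2"
    unfolding pole_location_def power_divide by (simp add: field_simps)
  also have "(1 + v0)^2 - (1 - v0)^2 = 4 * v0"
    by (simp add: power2_eq_square algebra_simps)
  finally show ?thesis .
qed

lemma norm_pole_coefficient: "norm (pole_coefficient v0 w0) = 2 * \<bar>w0\<bar> / (1 + v0)^2"
  unfolding pole_coefficient_def norm_mult norm_of_real by (simp add: abs_mult)

lemma B0_norm_omega0:
  assumes "v0 > 0"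
  shows "B0_norm (omega0 v0 w0) = 2 * \<bar>w0\<bar> / ((1 + v0) * min v0 1)"
proof -
  let ?a = "pole_location v0" and ?c = "pole_coefficient v0 w0"
  have cancel: "2 * (2 * W / P^2) / (2 * m / P) = 2 * W / (P * m)"
    if "P > 0" "m > 0" for P m W :: real
    using that by (simp add: field_simps power2_eq_square)
  have total: "2 * norm ?c / (1 - \<bar>?a\<bar>) = 2 * \<bar>w0\<bar> / ((1 + v0) * min v0 1)"
    unfolding norm_pole_coefficient one_minus_abs_pole_location[OF assms]
    by (rule cancel) (use assms in auto)
  have "omega0 v0 w0 = (\<lambda>x. ?c * pole_power 1 ?a x + cnj (?c * pole_power 1 ?a x))"
    using omega0_eq_pole_sum[OF assms] by (simp add: fun_eq_iff)
  then have "((\<lambda>k. norm (fourier_coeff (omega0 v0 w0) k)) has_sum (2 * norm ?c / (1 - \<bar>?a\<bar>))) UNIV"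
    using abs_pole_location_less_1[OF assms]
    by (simp only: norm_fourier_coeff_pole_sum) (rule has_sum_two_sided_geometric, simp_all)
  then show ?thesis
    unfolding B0_norm_def total by (rule infsumI)
qed

lemma L2_norm_omega0:
  assumes "v0 > 0"
  shows "L2_norm (omega0 v0 w0) = sqrt (4 * pi * w0^2 / (v0 * (1 + v0)^2))"
proof -
  let ?a = "pole_location v0" and ?c = "pole_coefficient v0 w0"
  define g where "g x = ?c * pole_power 1 ?a x" for x
  have "cmod (omega0 v0 w0 x)^2 = Re ((g x + cnj (g x))^2)" for x
  proof -
    have "omega0 v0 w0 x = g x + cnj (g x)"
      using omega0_eq_pole_sum[OF assms] by (simp add: g_def)
    then show ?thesis
      by (simp add: complex_add_cnj power2_eq_square del: complex_cnj_mult)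
  qed
  then have pointwise: "(\<lambda>x. cmod (omega0 v0 w0 x)^2) = (\<lambda>x. Re ((g x + cnj (g x))^2))"
    by simp
  have cancel: "4 * pi * (2 * \<bar>W\<bar> / P^2)^2 / (4 * v / P^2) = 4 * pi * W^2 / (v * P^2)"
    if "P > 0" "v > 0" for P v W :: real
    using that by (simp add: field_simps power2_eq_square)
  have "4 * pi * norm ?c ^ 2 / (1 - ?a^2) = 4 * pi * w0^2 / (v0 * (1 + v0)^2)"
    unfolding norm_pole_coefficient one_minus_pole_location_square[OF assms]
    by (rule cancel) (use assms in auto)
  moreover have "((\<lambda>x. Re ((g x + cnj (g x))^2)) has_integral 4 * pi * norm ?c ^ 2 / (1 - ?a^2)) {-pi..pi}"
    using has_integral_Re[OF has_integral_square_pole_sum[OF abs_pole_location_less_1[OF assms], of ?c]]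
    by (simp only: g_def Re_complex_of_real)
  ultimately have "((\<lambda>x. cmod (omega0 v0 w0 x)^2) has_integral 4 * pi * w0^2 / (v0 * (1 + v0)^2)) {-pi..pi}"
    unfolding pointwise by simp
  then show ?thesis
    unfolding L2_norm_def by (simp add: integral_unique)
qed

section \<open>The collapse constant\<close>

lemma le_by_derivative_sign_pattern:
  fixes f g :: "real \<Rightarrow> real"
  assumes deriv: "\<And>x. (f has_real_derivative - g x * ((x - m) * (x - r))) (at x)"
    and "\<And>x. g x \<ge> 0" and "0 \<le> m" and "m \<le> r" and "f 0 \<le> B" and "f r \<le> B" and "0 \<le> s"
  shows "f s \<le> B"
proof -
  have decreasing: "f b \<le> f a" if "a \<le> b" and "\<And>x. a \<le> x \<Longrightarrow> x \<le> b \<Longrightarrow> (x - m) * (x - r) \<ge> 0" for a b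
    using that(1)
  proof (rule DERIV_nonpos_imp_nonincreasing)
    fix x assume "a \<le> x" "x \<le> b"
    have "g x * ((x - m) * (x - r)) \<ge> 0"
      using assms(2)[of x] that(2)[OF \<open>a \<le> x\<close> \<open>x \<le> b\<close>] by (rule mult_nonneg_nonneg)
    then show "\<exists>y. DERIV f x :> y \<and> y \<le> 0"
      using deriv[of x] by (intro exI[of _ "- g x * ((x - m) * (x - r))"]) simp
  qed
  consider "s \<le> m" | "m \<le> s" "s \<le> r" | "r \<le> s" by linarith
  then show ?thesis
  proof cases
    case 1
    have "f s \<le> f 0"
      by (rule decreasing) (use 1 assms(4,7) in \<open>auto intro: mult_nonpos_nonpos\<close>)
    then show ?thesis using assms(5) by linarith
  next
    case 2
    have "f s \<le> f r"
    proof (rule DERIV_nonneg_imp_nondecreasing[OF 2(2)])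
      fix x assume "s \<le> x" "x \<le> r"
      then have "(x - m) * (x - r) \<le> 0"
        using 2 by (intro mult_nonneg_nonpos) auto
      with assms(2)[of x] have "g x * ((x - m) * (x - r)) \<le> 0"
        by (rule mult_nonneg_nonpos)
      then show "\<exists>y. DERIV f x :> y \<and> y \<ge> 0"
        using deriv[of x] by (intro exI[of _ "- g x * ((x - m) * (x - r))"]) simp
    qed
    then show ?thesis using assms(6) by linarith
  next
    case 3
    have "f s \<le> f r"
      by (rule decreasing) (use 3 assms(3,4) in auto)
    then show ?thesis using assms(6) by linarith
  qed
qed

lemma exp_neg_double_eq_one_minus_root: "\<exists>r::real. 1/2 \<le> r \<and> r < 1 \<and> exp (- 2 * r) = 1 - r"
proof -
  let ?f = "\<lambda>r::real. exp (- 2 * r) - (1 - r)"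
  have "?f (1/2) \<le> 0"
  proof -
    have "2 \<le> exp (1::real)"
      using exp_ge_add_one_self[of 1] by simp
    then have "exp (- 2 * (1/2::real)) \<le> 1/2"
      by (simp add: exp_minus le_imp_inverse_le[of 2 "exp 1", simplified])
    then show ?thesis by simp
  qed
  moreover have "0 \<le> ?f (9/10)"
  proof -
    have "exp (9/5::real) \<le> exp 1 * exp 1"
      by (simp flip: exp_add)
    also have "\<dots> \<le> 3 * 3"
      using exp_le by (intro mult_mono) auto
    finally have "1/10 \<le> exp (- 2 * (9/10::real))"
      by (simp add: exp_minus field_simps)
    then show ?thesis by simp
  qed
  moreover have "continuous_on {1/2..9/10} ?f"
    by (intro continuous_intros)
  ultimately obtain r where "1/2 \<le> r" "r \<le> 9/10" "?f r = 0"
    using IVT'[of ?f "1/2" 0 "9/10"] by auto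
  then show ?thesis by auto
qed

lemma square_le_exp_double_minus_one:
  fixes r s :: real
  assumes "1/2 \<le> r" and "r < 1" and root: "exp (- 2 * r) = 1 - r" and "0 \<le> s"
  shows "s^2 \<le> r * (1 - r) * (exp (2 * s) - 1)"
proof -
  define M where "M = r * (1 - r)"
  have "M > 0" using assms(1,2) by (simp add: M_def)
  define \<Phi> where "\<Phi> x = exp (- 2 * x) * (1 + x^2 / M)" for x :: real
  have "(\<Phi> has_real_derivative - (2 / M * exp (- 2 * x)) * ((x - (1 - r)) * (x - r))) (at x)" for x
  proof -
    have "(\<Phi> has_real_derivative exp (- 2 * x) * (- 2) * (1 + x^2 / M) + exp (- 2 * x) * (2 * x / M)) (at x)"
      unfolding \<Phi>_def using \<open>M > 0\<close> by (auto intro!: derivative_eq_intros simp: power2_eq_square)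
    moreover have "(x - (1 - r)) * (x - r) = x^2 - x + M"
      by (simp add: M_def algebra_simps power2_eq_square)
    moreover have "E * (- 2) * (1 + x^2 / M) + E * (2 * x / M) = - (2 / M * E) * (x^2 - x + M)" for E
      using \<open>M > 0\<close> by (simp add: field_simps power2_eq_square)
    ultimately show ?thesis
      by metis
  qed
  moreover have "2 / M * exp (- 2 * x) \<ge> 0" for x
    using \<open>M > 0\<close> by simp
  moreover have "0 \<le> 1 - r" "1 - r \<le> r"
    using assms(1,2) by simp_all
  moreover have "\<Phi> 0 \<le> 1" "\<Phi> r \<le> 1"
    unfolding \<Phi>_def root using assms(1,2) by (simp_all add: M_def field_simps power2_eq_square)
  ultimately have "\<Phi> s \<le> 1"
    using assms(4) by (rule le_by_derivative_sign_pattern)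
  moreover have "\<Phi> s = (1 + s^2 / M) / exp (2 * s)"
    by (simp add: \<Phi>_def exp_minus divide_inverse mult.commute)
  ultimately have "1 + s^2 / M \<le> exp (2 * s)"
    by (simp add: pos_divide_le_eq)
  then have "s^2 / M \<le> exp (2 * s) - 1"
    by simp
  then show ?thesis
    using \<open>M > 0\<close> by (simp add: M_def pos_divide_le_eq mult.commute)
qed

text \<open>The supremum is attained at the root r of exp (-2r) = 1 - r, where it equals r (1 - r);
  this is also the maximum of s^2 / (exp (2s) - 1).\<close>

definition collapse_constant :: real where
  "collapse_constant = (SUP s\<in>{0..}. exp (- 2 * s) - (1 - s)^2)"

lemma collapse_constant_bounds:
  "collapse_constant > 0" "0 \<le> s \<Longrightarrow> s^2 \<le> collapse_constant * (exp (2 * s) - 1)"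
proof -
  obtain r :: real where r: "1/2 \<le> r" "r < 1" "exp (- 2 * r) = 1 - r"
    using exp_neg_double_eq_one_minus_root by blast
  have "bdd_above ((\<lambda>s. exp (- 2 * s) - (1 - s)^2) ` {0::real..})"
  proof (rule bdd_aboveI2)
    fix x :: real assume "x \<in> {0..}"
    then have "exp (- 2 * x) \<le> 1" by simp
    then show "exp (- 2 * x) - (1 - x)^2 \<le> 1"
      using zero_le_power2[of "1 - x"] by linarith
  qed
  then have "exp (- 2 * r) - (1 - r)^2 \<le> collapse_constant"
    unfolding collapse_constant_def by (rule cSUP_upper[rotated]) (use r in simp)
  then have M: "r * (1 - r) \<le> collapse_constant"
    using r(3) by (simp add: power2_eq_square algebra_simps)
  moreover have "r * (1 - r) > 0"
    using r(1,2) by simp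
  ultimately show "collapse_constant > 0"
    by linarith
  assume "0 \<le> s"
  then have "s^2 \<le> r * (1 - r) * (exp (2 * s) - 1)"
    by (rule square_le_exp_double_minus_one[OF r])
  also have "\<dots> \<le> collapse_constant * (exp (2 * s) - 1)"
    using M \<open>0 \<le> s\<close> by (intro mult_right_mono) auto
  finally show "s^2 \<le> collapse_constant * (exp (2 * s) - 1)" .
qed

section \<open>Collapse\<close>

lemma collapse_time_root:
  assumes "(v_c \<nu> v0 w0 \<longlongrightarrow> 0) (at_left tc) \<or> filterlim (v_c \<nu> v0 w0) at_top (at_left tc)"
  shows "clm_den \<nu> v0 w0 tc = 0 \<or> -1 + w0 / (1 + v0) * tc + (exp (\<nu> * tc) + 1) / 2 * (1 + v0) = 0"
proof (cases "clm_den \<nu> v0 w0 tc = 0")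
  case False
  then have "isCont (v_c \<nu> v0 w0) tc"
    unfolding v_c_def[abs_def] clm_den_def by (intro continuous_intros) auto
  then have cont: "(v_c \<nu> v0 w0 \<longlongrightarrow> v_c \<nu> v0 w0 tc) (at_left tc)"
    using continuous_at_imp_continuous_at_within continuous_within by blast
  have "\<not> filterlim (v_c \<nu> v0 w0) at_top (at_left tc)"
    using not_tendsto_and_filterlim_at_infinity[OF _ cont] filterlim_at_top_imp_at_infinity by fastforce
  then have "v_c \<nu> v0 w0 tc = 0"
    using assms tendsto_unique[OF _ cont] by fastforce
  with False show ?thesis
    by (simp add: v_c_def)
qed simp

lemma collapse_time_split:
  fixes \<nu> v0 w0 tc :: real
  assumes "\<nu> > 0" and "v0 > 0" and "tc > 0"
    and root: "clm_den \<nu> v0 w0 tc = 0 \<or> -1 + w0 / (1 + v0) * tc + (exp (\<nu> * tc) + 1) / 2 * (1 + v0) = 0"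
  obtains p q where "0 \<le> p" "0 \<le> q" "p + q = exp (\<nu> * tc)" "4 * p * q = exp (\<nu> * tc)^2 - 1"
    and "\<bar>w0\<bar> * tc = (1 + v0) * (p + q * v0)"
proof -
  define E where "E = exp (\<nu> * tc)"
  have "E \<ge> 1" using assms(1,3) by (simp add: E_def)
  have "1 + v0 > 0" using assms(2) by simp
  have abs_w0: "\<bar>w0\<bar> * tc = \<bar>w0 * tc\<bar>" using assms(3) by (simp add: abs_mult)
  have product: "4 * ((E + 1) / 2) * ((E - 1) / 2) = E^2 - 1"
    by (simp add: power2_eq_square field_simps)
  consider "w0 * tc = (1 + v0) * ((E + 1) / 2 + (E - 1) / 2 * v0)"
    | "- w0 * tc = (1 + v0) * ((E - 1) / 2 + (E + 1) / 2 * v0)"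
    using root \<open>1 + v0 > 0\<close> unfolding clm_den_def E_def[symmetric] by (auto simp: field_simps)
  then show ?thesis
  proof cases
    case 1
    moreover have "0 < (1 + v0) * ((E + 1) / 2 + (E - 1) / 2 * v0)"
      using \<open>E \<ge> 1\<close> \<open>1 + v0 > 0\<close> assms(2) by (intro mult_pos_pos add_pos_nonneg) auto
    ultimately have "\<bar>w0\<bar> * tc = (1 + v0) * ((E + 1) / 2 + (E - 1) / 2 * v0)"
      unfolding abs_w0 by simp
    then show ?thesis
      using \<open>E \<ge> 1\<close> product
      by (intro that[of "(E + 1) / 2" "(E - 1) / 2"]) (simp_all add: E_def[symmetric] field_simps)
  next
    case 2
    moreover have "0 < (1 + v0) * ((E - 1) / 2 + (E + 1) / 2 * v0)"
      using \<open>E \<ge> 1\<close> \<open>1 + v0 > 0\<close> assms(2) by (intro mult_pos_pos add_nonneg_pos) auto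
    ultimately have "\<bar>w0\<bar> * tc = (1 + v0) * ((E - 1) / 2 + (E + 1) / 2 * v0)"
      unfolding abs_w0 by (metis abs_minus_cancel abs_of_pos mult_minus_left)
    then show ?thesis
      using \<open>E \<ge> 1\<close> product
      by (intro that[of "(E - 1) / 2" "(E + 1) / 2"]) (simp_all add: E_def[symmetric] field_simps)
  qed
qed

lemma exp1_mult_le_exp: "exp 1 * x \<le> exp (x::real)"
proof -
  have "exp 1 * x \<le> exp 1 * exp (x - 1)"
    using exp_ge_add_one_self[of "x - 1"] by simp
  then show ?thesis
    by (simp flip: exp_add)
qed

lemma min_mult_sum_le_affine:
  fixes p q v :: real
  assumes "0 \<le> p" and "0 \<le> q" and "0 < v"
  shows "min v 1 * (p + q) \<le> p + q * v"
proof (cases "v \<le> 1")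
  case True
  then have "v * p \<le> p"
    using assms(1,3) by (simp add: mult_left_le_one_le)
  then show ?thesis
    using True by (simp add: algebra_simps)
next
  case False
  then have "q \<le> q * v"
    using mult_left_mono[of 1 v q] assms(2) by simp
  then show ?thesis
    using False by simp
qed

lemma B0_norm_omega0_ge_at_collapse:
  fixes \<nu> v0 w0 tc p q :: real
  assumes "v0 > 0" and "tc > 0" and "0 \<le> p" and "0 \<le> q" and "p + q = exp (\<nu> * tc)"
    and balance: "\<bar>w0\<bar> * tc = (1 + v0) * (p + q * v0)"
  shows "2 * exp 1 * \<nu> \<le> B0_norm (omega0 v0 w0)"
proof -
  define m where "m = min v0 1"
  have "m > 0" "1 + v0 > 0"
    using assms(1) by (simp_all add: m_def)
  have "exp 1 * (\<nu> * tc) * m \<le> (p + q) * m"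
    using exp1_mult_le_exp[of "\<nu> * tc"] \<open>m > 0\<close> assms(5) by (simp add: mult_right_mono)
  also have "\<dots> \<le> p + q * v0"
    using min_mult_sum_le_affine[OF assms(3,4,1)] by (simp add: m_def mult.commute)
  finally have "2 * exp 1 * \<nu> \<le> 2 * (p + q * v0) / (m * tc)"
    using assms(2) \<open>m > 0\<close> by (simp add: field_simps)
  also have "\<dots> = 2 * ((1 + v0) * (p + q * v0)) / ((1 + v0) * m * tc)"
    using \<open>1 + v0 > 0\<close> by (simp add: mult.assoc)
  also have "\<dots> = 2 * \<bar>w0\<bar> / ((1 + v0) * m)"
    unfolding balance[symmetric] using assms(2) by simp
  finally show ?thesis
    by (simp add: B0_norm_omega0[OF assms(1)] m_def)
qed

lemma L2_norm_omega0_ge_at_collapse: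
  fixes \<nu> v0 w0 tc p q :: real
  assumes "v0 > 0" and "\<nu> > 0" and "tc > 0" and "0 \<le> p" and "0 \<le> q"
    and "4 * p * q = exp (\<nu> * tc)^2 - 1"
    and balance: "\<bar>w0\<bar> * tc = (1 + v0) * (p + q * v0)"
  shows "2 * sqrt pi * \<nu> / sqrt collapse_constant \<le> L2_norm (omega0 v0 w0)"
proof -
  define M where "M = collapse_constant"
  define X where "X = (p + q * v0)^2 / v0"
  have "M > 0"
    using collapse_constant_bounds(1) by (simp add: M_def)
  have "(\<nu> * tc)^2 \<le> M * (exp (\<nu> * tc)^2 - 1)"
    using collapse_constant_bounds(2)[of "\<nu> * tc"] assms(2,3) by (simp add: M_def exp_double[symmetric])
  also have "\<dots> \<le> M * X"
  proof -
    have "4 * p * q * v0 \<le> (p + q * v0)^2"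
      using sum_squares_ge_zero[of "p - q * v0" 0] by (simp add: power2_eq_square algebra_simps)
    then show ?thesis
      using assms(1,6) \<open>M > 0\<close> by (simp add: X_def pos_le_divide_eq)
  qed
  finally have "\<nu>^2 / M \<le> X / tc^2"
    using assms(3) \<open>M > 0\<close> by (simp add: field_simps power_mult_distrib)
  also have "X / tc^2 = w0^2 / (v0 * (1 + v0)^2)"
  proof -
    have "(p + q * v0)^2 * (1 + v0)^2 = w0^2 * tc^2"
      using arg_cong[OF balance, of "\<lambda>y. y^2"] by (simp add: power_mult_distrib mult.commute)
    then show ?thesis
      using assms(1,3) by (simp add: X_def field_simps)
  qed
  finally have "4 * pi * (\<nu>^2 / M) \<le> 4 * pi * (w0^2 / (v0 * (1 + v0)^2))"
    by (intro mult_left_mono) simp_all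
  then have "sqrt (4 * pi * (\<nu>^2 / M)) \<le> L2_norm (omega0 v0 w0)"
    by (simp add: L2_norm_omega0[OF assms(1)])
  moreover have "sqrt (4 * pi * (\<nu>^2 / M)) = 2 * sqrt pi * \<nu> / sqrt M"
    using assms(2) by (simp add: real_sqrt_mult real_sqrt_divide)
  ultimately show ?thesis
    by (simp add: M_def)
qed

theorem mainTheorem15:
  fixes \<nu> v0 w0 :: real
  assumes "\<nu> > 0" and "v0 > 0" and "w0 \<noteq> 0"
    and collapse: "\<exists>tc>0. (\<forall>t\<in>{0..<tc}. v_c \<nu> v0 w0 t > 0) \<and>
                   ((v_c \<nu> v0 w0 \<longlongrightarrow> 0) (at_left tc) \<or>
                    filterlim (v_c \<nu> v0 w0) at_top (at_left tc))"
  shows "B0_norm (omega0 v0 w0) \<ge> 2 * exp 1 * \<nu>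
         \<and> L2_norm (omega0 v0 w0) \<ge>
             2 * sqrt pi * \<nu> / sqrt (SUP s\<in>{0::real..}. exp (- 2 * s) - (1 - s)^2)"
proof -
  obtain tc where "tc > 0"
    and "(v_c \<nu> v0 w0 \<longlongrightarrow> 0) (at_left tc) \<or> filterlim (v_c \<nu> v0 w0) at_top (at_left tc)"
    using collapse by blast
  then obtain p q where "0 \<le> p" "0 \<le> q" "p + q = exp (\<nu> * tc)" "4 * p * q = exp (\<nu> * tc)^2 - 1"
    and "\<bar>w0\<bar> * tc = (1 + v0) * (p + q * v0)"
    using collapse_time_split[OF assms(1,2)] collapse_time_root by metis
  then show ?thesis
    using B0_norm_omega0_ge_at_collapse[OF assms(2) \<open>tc > 0\<close>]
      L2_norm_omega0_ge_at_collapse[OF assms(2,1) \<open>tc > 0\<close>]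
    unfolding collapse_constant_def by blast
qed

end
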